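(* For every rectangular permutation $\pi$ in the domain of the respective operator, $\psi_1(\pi)$, $\psi_2(\pi)$ and $\psi_u(\pi)$ have the same number of recoils as $\pi$, and $\psi_d(\pi)$ has exactly one more recoil than $\pi$.
   Context: A recoil of $\pi\in S_n$ is a value $i\in\{1,\dots,n-1\}$ with $\pi^{-1}_i>\pi^{-1}_{i+1}$ ($i+1$ occurs before $i$). A permutation is rectangular if it avoids $2413,2431,4213,4231$. For $\pi\in S_n$ (one-line form) and $1\le i,j\le n+1$, $\rho_{i,j}(\pi)\in S_{n+1}$ is obtained by increasing by $1$ every entry $\ge i$ and inserting the value $i$ at position $j$. Operators: $\psi_1=\rho_{1,1}$, domain all rectangular permutations (including the empty one); $\psi_2=\rho_{1,2}$, domain rectangular $\pi$ of size $\ge1$ with $\pi_1\ne1$; $\psi_u(\pi)=\rho_{\pi_1,1}(\pi)$, same domain as $\psi_2$; $\psi_d(\pi)=\rho_{\pi_1+1,1}(\pi)$, domain rectangular $\pi$ of size $\ge1$. *)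

theory Defs
  imports Main
begin

text \<open>Permutations of size n are represented in one-line form as lists of length n
  whose entries are exactly 1, ..., n; positions are 0-indexed in the list.\<close>

definition is_perm :: "nat list \<Rightarrow> bool" where
  "is_perm xs \<longleftrightarrow> distinct xs \<and> set xs = {1..length xs}"

definition contains :: "nat list \<Rightarrow> nat list \<Rightarrow> bool" where
  "contains xs p \<longleftrightarrow> (\<exists>is :: nat list. length is = length p \<and> sorted_wrt (<) is \<and>
     (\<forall>k<length is. is ! k < length xs) \<and>
     (\<forall>a<length p. \<forall>b<length p. (xs ! (is ! a) < xs ! (is ! b) \<longleftrightarrow> p ! a < p ! b)))"

definition rectangular :: "nat list \<Rightarrow> bool" where
  "rectangular xs \<longleftrightarrow> is_perm xs \<and>
     \<not> contains xs [2,4,1,3] \<and> \<not> contains xs [2,4,3,1] \<and>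
     \<not> contains xs [4,2,1,3] \<and> \<not> contains xs [4,2,3,1]"

definition is_recoil :: "nat list \<Rightarrow> nat \<Rightarrow> bool" where
  "is_recoil xs i \<longleftrightarrow> 1 \<le> i \<and> i < length xs \<and>
     (\<exists>j k. j < k \<and> k < length xs \<and> xs ! j = i + 1 \<and> xs ! k = i)"

definition recoils :: "nat list \<Rightarrow> nat" where
  "recoils xs = card {i. is_recoil xs i}"

text \<open>rho i j: increase every entry >= i by one, and insert value i at (1-indexed) position j.\<close>
definition rho :: "nat \<Rightarrow> nat \<Rightarrow> nat list \<Rightarrow> nat list" where
  "rho i j xs = (let ys = map (\<lambda>x. if x \<ge> i then x + 1 else x) xs
                 in take (j - 1) ys @ [i] @ drop (j - 1) ys)"

definition psi1 :: "nat list \<Rightarrow> nat list" where "psi1 xs = rho 1 1 xs"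
definition psi2 :: "nat list \<Rightarrow> nat list" where "psi2 xs = rho 1 2 xs"
definition psiu :: "nat list \<Rightarrow> nat list" where "psiu xs = rho (hd xs) 1 xs"
definition psid :: "nat list \<Rightarrow> nat list" where "psid xs = rho (hd xs + 1) 1 xs"

end

theory Submission
  imports Defs
begin

(* Only the values adjacent to v
   change their relative order: the recoil set of v # map (shift v) xs is the image under
   shift v of the recoil set of xs together with v - 1 (when v >= 2, since v now precedes
   v - 1), and v itself is never a recoil. So the count grows by one exactly when v >= 2 and
   v - 1 was not yet a recoil of xs. For psiu (v = hd xs) the value hd xs - 1 already is a
   recoil, for psid (v = hd xs + 1) the value hd xs never is; psi2 is psi1 with its first
   two entries, the non-consecutive values 1 and hd xs + 1, swapped. *)

fun occurs_before :: "nat list \<Rightarrow> nat \<Rightarrow> nat \<Rightarrow> bool" where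
  "occurs_before [] a b = False"
| "occurs_before (x # xs) a b = ((x = a \<and> b \<in> set xs) \<or> occurs_before xs a b)"

lemma occurs_before_iff_nth:
  "occurs_before xs a b \<longleftrightarrow> (\<exists>j k. j < k \<and> k < length xs \<and> xs ! j = a \<and> xs ! k = b)"
proof (induction xs)
  case Nil
  then show ?case by simp
next
  case (Cons x xs)
  show ?case
  proof
    assume "occurs_before (x # xs) a b"
    then consider "x = a" "b \<in> set xs" | "occurs_before xs a b" by auto
    then show "\<exists>j k. j < k \<and> k < length (x # xs) \<and> (x # xs) ! j = a \<and> (x # xs) ! k = b"
    proof cases
      case 1
      then obtain k where "k < length xs" "xs ! k = b" by (auto simp: in_set_conv_nth)
      with 1 show ?thesis by (intro exI[of _ 0] exI[of _ "Suc k"]) auto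
    next
      case 2
      then obtain j k where "j < k" "k < length xs" "xs ! j = a" "xs ! k = b"
        using Cons.IH by blast
      then show ?thesis by (intro exI[of _ "Suc j"] exI[of _ "Suc k"]) auto
    qed
  next
    assume "\<exists>j k. j < k \<and> k < length (x # xs) \<and> (x # xs) ! j = a \<and> (x # xs) ! k = b"
    then obtain j k where jk: "j < k" "k < length (x # xs)" "(x # xs) ! j = a" "(x # xs) ! k = b"
      by blast
    then obtain k' where k: "k = Suc k'" by (cases k) auto
    show "occurs_before (x # xs) a b"
    proof (cases j)
      case 0
      with jk k show ?thesis by auto
    next
      case (Suc j')
      with jk k Cons.IH show ?thesis by auto
    qed
  qed
qed

lemma occurs_before_mem: "occurs_before xs a b \<Longrightarrow> a \<in> set xs \<and> b \<in> set xs"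
  by (induction xs) auto

lemma occurs_before_map_inj:
  "inj f \<Longrightarrow> occurs_before (map f xs) (f a) (f b) \<longleftrightarrow> occurs_before xs a b"
  by (induction xs) (auto simp: inj_eq)

lemma is_recoil_iff_occurs_before:
  "is_recoil xs i \<longleftrightarrow> 1 \<le> i \<and> i < length xs \<and> occurs_before xs (Suc i) i"
  unfolding is_recoil_def occurs_before_iff_nth by simp

lemma is_recoil_perm_iff_occurs_before:
  assumes "is_perm xs"
  shows "is_recoil xs i \<longleftrightarrow> occurs_before xs (Suc i) i"
  using assms occurs_before_mem[of xs "Suc i" i]
  by (auto simp: is_recoil_iff_occurs_before is_perm_def)

lemma recoils_swap_non_consecutive:
  assumes "a \<noteq> Suc b" "b \<noteq> Suc a"
  shows "recoils (a # b # ys) = recoils (b # a # ys)"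
proof -
  have "is_recoil (a # b # ys) i \<longleftrightarrow> is_recoil (b # a # ys) i" for i
    using assms by (auto simp: is_recoil_iff_occurs_before)
  then show ?thesis by (simp add: recoils_def)
qed

lemma is_recoil_perm_Cons_pred:
  assumes "is_perm (v # ys)"
  shows "is_recoil (v # ys) (v - 1) \<longleftrightarrow> 2 \<le> v"
proof -
  have v: "v \<in> {1..length (v # ys)}" and ys: "set ys = {1..length (v # ys)} - {v}"
    using assms by (auto simp: is_perm_def)
  then have "Suc (v - 1) = v" by simp
  then have "is_recoil (v # ys) (v - 1) \<longleftrightarrow> occurs_before (v # ys) v (v - 1)"
    using is_recoil_perm_iff_occurs_before[OF assms, of "v - 1"] by simp
  also have "\<dots> \<longleftrightarrow> v - 1 \<in> set ys"
    using occurs_before_mem[of ys v "v - 1"] by auto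
  also have "\<dots> \<longleftrightarrow> 2 \<le> v"
    unfolding ys using v by auto
  finally show ?thesis .
qed

lemma not_is_recoil_perm_Cons_head:
  assumes "is_perm (v # ys)"
  shows "\<not> is_recoil (v # ys) v"
  using assms occurs_before_mem[of ys "Suc v" v]
  by (auto simp: is_recoil_perm_iff_occurs_before is_perm_def)

definition shift :: "nat \<Rightarrow> nat \<Rightarrow> nat" where
  "shift v x = (if v \<le> x then Suc x else x)"

lemma inj_shift: "inj (shift v)"
  by (auto simp: inj_def shift_def)

lemma range_shift: "range (shift v) = - {v}"
proof
  show "range (shift v) \<subseteq> - {v}" by (auto simp: shift_def)
  show "- {v} \<subseteq> range (shift v)"
  proof
    fix j assume "j \<in> - {v}"
    then have "j = shift v (if j < v then j else j - 1)" by (auto simp: shift_def)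
    then show "j \<in> range (shift v)" by (rule range_eqI)
  qed
qed

lemma rho_1: "rho v 1 xs = v # map (shift v) xs"
  by (simp add: rho_def shift_def Let_def)

lemma is_perm_Cons_shift:
  assumes xs: "is_perm xs" and v: "1 \<le> v" "v \<le> Suc (length xs)"
  shows "is_perm (v # map (shift v) xs)"
proof -
  have "shift v ` {1..length xs} = {1..Suc (length xs)} - {v}"
  proof
    show "shift v ` {1..length xs} \<subseteq> {1..Suc (length xs)} - {v}"
      by (auto simp: shift_def)
    show "{1..Suc (length xs)} - {v} \<subseteq> shift v ` {1..length xs}"
    proof
      fix j assume j: "j \<in> {1..Suc (length xs)} - {v}"
      let ?i = "if j < v then j else j - 1"
      from j v have "j = shift v ?i" "?i \<in> {1..length xs}" by (auto simp: shift_def)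
      then show "j \<in> shift v ` {1..length xs}" by blast
    qed
  qed
  moreover have "v \<notin> shift v ` set xs" "distinct (map (shift v) xs)"
    using xs range_shift[of v] by (auto simp: is_perm_def distinct_map inj_on_subset[OF inj_shift])
  ultimately show ?thesis
    using xs v by (auto simp: is_perm_def)
qed

lemma is_recoil_Cons_shift:
  assumes xs: "is_perm xs" and v: "1 \<le> v" "v \<le> Suc (length xs)"
  shows "is_recoil (v # map (shift v) xs) (shift v i) \<longleftrightarrow>
    is_recoil xs i \<or> (2 \<le> v \<and> i = v - 1)"
proof -
  let ?ys = "v # map (shift v) xs"
  have ys: "is_perm ?ys" using is_perm_Cons_shift[OF assms] .
  consider "2 \<le> v" "i = v - 1" | "i = 0" | "1 \<le> i" "Suc i \<noteq> v" by linarith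
  then show ?thesis
  proof cases
    case 1
    then have "shift v i = v - 1" by (simp add: shift_def)
    with 1 show ?thesis using is_recoil_perm_Cons_pred[OF ys] by simp
  next
    case 2
    with v show ?thesis by (simp add: shift_def is_recoil_def)
  next
    case 3
    then have "shift v (Suc i) = Suc (shift v i)" "shift v (Suc i) \<noteq> v"
      by (auto simp: shift_def)
    then have "is_recoil ?ys (shift v i) \<longleftrightarrow>
        occurs_before (map (shift v) xs) (shift v (Suc i)) (shift v i)"
      by (simp add: is_recoil_perm_iff_occurs_before[OF ys])
    also have "\<dots> \<longleftrightarrow> is_recoil xs i"
      by (simp add: occurs_before_map_inj[OF inj_shift] is_recoil_perm_iff_occurs_before[OF xs])
    finally show ?thesis using 3 by auto
  qed
qed

lemma recoils_Cons_shift: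
  assumes xs: "is_perm xs" and v: "1 \<le> v" "v \<le> Suc (length xs)"
  shows "recoils (v # map (shift v) xs) =
    recoils xs + (if 2 \<le> v \<and> \<not> is_recoil xs (v - 1) then 1 else 0)"
proof -
  let ?ys = "v # map (shift v) xs"
  let ?R = "{i. is_recoil xs i}"
  have "{j. is_recoil ?ys j} \<subseteq> range (shift v)"
    using not_is_recoil_perm_Cons_head[OF is_perm_Cons_shift[OF assms]] range_shift[of v] by auto
  then have "{j. is_recoil ?ys j} = shift v ` {i. is_recoil ?ys (shift v i)}"
    by blast
  also have "\<dots> = shift v ` (?R \<union> {i. 2 \<le> v \<and> i = v - 1})"
    using is_recoil_Cons_shift[OF assms] by (simp add: Collect_disj_eq)
  finally have "recoils ?ys = card (?R \<union> {i. 2 \<le> v \<and> i = v - 1})"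
    by (simp add: recoils_def card_image inj_on_subset[OF inj_shift])
  moreover have "finite ?R"
    by (rule finite_subset[of _ "{..<length xs}"]) (auto simp: is_recoil_def)
  ultimately show ?thesis by (cases "2 \<le> v") (auto simp: recoils_def insert_absorb)
qed

lemma recoils_psi1:
  assumes "is_perm xs"
  shows "recoils (psi1 xs) = recoils xs"
  using recoils_Cons_shift[OF assms, of 1] unfolding psi1_def rho_1 by simp

lemma recoils_psi2:
  assumes xs: "is_perm xs" and "xs \<noteq> []" "hd xs \<noteq> 1"
  shows "recoils (psi2 xs) = recoils xs"
proof -
  obtain x ys where xs_eq: "xs = x # ys" using assms(2) by (cases xs) auto
  have "1 \<le> x" using xs by (auto simp: xs_eq is_perm_def)
  with assms(3) have x: "2 \<le> x" by (simp add: xs_eq)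
  then have "psi2 xs = Suc x # 1 # map (shift 1) ys" "psi1 xs = 1 # Suc x # map (shift 1) ys"
    by (simp_all add: xs_eq psi1_def psi2_def rho_def shift_def Let_def)
  with x show ?thesis
    using recoils_swap_non_consecutive[of "Suc x" 1] recoils_psi1[OF xs] by simp
qed

lemma recoils_psiu:
  assumes "is_perm xs" "xs \<noteq> []"
  shows "recoils (psiu xs) = recoils xs"
proof -
  obtain x ys where xs: "xs = x # ys" using assms(2) by (cases xs) auto
  have "1 \<le> x" "x \<le> length xs" using assms(1) xs by (auto simp: is_perm_def)
  then show ?thesis
    using recoils_Cons_shift[OF assms(1), of x] is_recoil_perm_Cons_pred[of x ys] assms(1) xs
    unfolding psiu_def rho_1 by simp
qed

lemma recoils_psid:
  assumes "is_perm xs" "xs \<noteq> []"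
  shows "recoils (psid xs) = recoils xs + 1"
proof -
  obtain x ys where xs: "xs = x # ys" using assms(2) by (cases xs) auto
  have "1 \<le> x" "x \<le> length xs" using assms(1) xs by (auto simp: is_perm_def)
  then show ?thesis
    using recoils_Cons_shift[OF assms(1), of "Suc x"] not_is_recoil_perm_Cons_head[of x ys]
      assms(1) xs
    unfolding psid_def rho_1 by simp
qed

theorem lemma4p4:
  fixes xs :: "nat list"
  assumes "rectangular xs"
  shows "recoils (psi1 xs) = recoils xs
    \<and> (xs \<noteq> [] \<and> hd xs \<noteq> 1 \<longrightarrow> recoils (psi2 xs) = recoils xs)
    \<and> (xs \<noteq> [] \<and> hd xs \<noteq> 1 \<longrightarrow> recoils (psiu xs) = recoils xs)
    \<and> (xs \<noteq> [] \<longrightarrow> recoils (psid xs) = recoils xs + 1)"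
proof -
  have "is_perm xs" using assms by (simp add: rectangular_def)
  then show ?thesis using recoils_psi1 recoils_psi2 recoils_psiu recoils_psid by blast
qed

end
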